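(* Let $A,B\in\mathcal{B}$ have nonzero diameters, and let $\varepsilon>0$ satisfy $2\varepsilon<\min\{\operatorname{diam}A,\operatorname{diam}B\}$. Then no $\varepsilon$-shortest curve connecting $A$ and $B$ passes through $\Delta_1$.
   Context: All metric spaces (with finite-valued metrics) are considered up to isometry. $\mathcal{GH}$ denotes the class (in the sense of von Neumann–Bernays–Gödel set theory) of representatives of isometry classes of all metric spaces, and $\mathcal{B}\subset\mathcal{GH}$ the subclass of bounded metric spaces. $d_{GH}$ is the Gromov–Hausdorff distance, with values in $[0,\infty]$: $d_{GH}(X,Y)$ is the infimum of $r$ such that there exist a metric space $Z$ and subsets $X',Y'\subset Z$ isometric to $X,Y$ with Hausdorff distance $d_H(X',Y')\le r$. Topology on the class: for each cardinal $n$, the subclass $\mathcal{GH}_n$ of spaces of cardinality at most $n$ is a set, endowed with the topology whose base consists of the open balls of $d_{GH}$. A map $f$ from a topological space $Z$ to $\mathcal{GH}$ is continuous if it is continuous as a map into $\mathcal{GH}_n$ for some (equivalently, every) cardinal $n$ with $f(Z)\subset\mathcal{GH}_n$. A continuous curve is a continuous map from a segment $[a,b]$. The length $|\gamma|$ of a continuous curve $\gamma\colon[a,b]\to\mathcal{GH}$ is the supremum of $\sum_i d_{GH}(\gamma(t_i),\gamma(t_{i+1}))$ over all partitions $a=t_1<\dots<t_k=b$. An $\varepsilon$-shortest curve connecting $A$ and $B$ is a continuous curve $\gamma$ with $\gamma(a)=A$, $\gamma(b)=B$ and $|\gamma|\le d_{GH}(A,B)+\varepsilon$. $\Delta_1$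 is the single-point metric space. *)

theory Defs
  imports "HOL-Analysis.Analysis"
begin

type_synonym 'a mspace_rep = "'a set \<times> ('a \<Rightarrow> 'a \<Rightarrow> real)"

definition is_mspace :: "'a mspace_rep \<Rightarrow> bool" where
  "is_mspace X \<longleftrightarrow> Metric_space (fst X) (snd X)"

definition bounded_mspace :: "'a mspace_rep \<Rightarrow> bool" where
  "bounded_mspace X \<longleftrightarrow> is_mspace X \<and> (\<exists>C. \<forall>x\<in>fst X. \<forall>y\<in>fst X. snd X x y \<le> C)"

text \<open>Diameter, extended-real valued (the empty space has diameter -infinity).\<close>
definition mdiam :: "'a mspace_rep \<Rightarrow> ereal" where
  "mdiam X = Sup {ereal (snd X x y) | x y. x \<in> fst X \<and> y \<in> fst X}"

definition isom_embed :: "('a \<Rightarrow> 'c) \<Rightarrow> 'a mspace_rep \<Rightarrow> 'c set \<Rightarrow> ('c \<Rightarrow> 'c \<Rightarrow> real) \<Rightarrow> bool" where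
  "isom_embed f X Z dZ \<longleftrightarrow> f ` fst X \<subseteq> Z \<and>
     (\<forall>x\<in>fst X. \<forall>y\<in>fst X. dZ (f x) (f y) = snd X x y)"

definition isometric :: "'a mspace_rep \<Rightarrow> 'b mspace_rep \<Rightarrow> bool" where
  "isometric X Y \<longleftrightarrow> (\<exists>f. bij_betw f (fst X) (fst Y) \<and>
     (\<forall>x\<in>fst X. \<forall>y\<in>fst X. snd Y (f x) (f y) = snd X x y))"

definition hausdist_le :: "('c \<Rightarrow> 'c \<Rightarrow> real) \<Rightarrow> 'c set \<Rightarrow> 'c set \<Rightarrow> real \<Rightarrow> bool" where
  "hausdist_le dZ P Q r \<longleftrightarrow>
     (\<forall>p\<in>P. \<forall>s>r. \<exists>q\<in>Q. dZ p q < s) \<and> (\<forall>q\<in>Q. \<forall>s>r. \<exists>p\<in>P. dZ p q < s)"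

text \<open>Gromov--Hausdorff distance, with values in [0, infinity]. The ambient space Z is taken
  inside the type 'a + 'b (which suffices, since one may always restrict Z to X' \<union> Y').\<close>
definition dGH :: "'a mspace_rep \<Rightarrow> 'b mspace_rep \<Rightarrow> ereal" where
  "dGH X Y = Inf {ereal r | r. 0 \<le> r \<and>
     (\<exists>(Z :: ('a + 'b) set) dZ f g. Metric_space Z dZ \<and> isom_embed f X Z dZ \<and> isom_embed g Y Z dZ
        \<and> hausdist_le dZ (f ` fst X) (g ` fst Y) r)}"

definition Delta1 :: "unit mspace_rep" where
  "Delta1 = ({()}, \<lambda>_ _. 0)"

text \<open>Continuity of a curve [a,b] \<rightarrow> GH for the topology with base the open d_GH-balls
  (unfolded in epsilon-delta form).\<close>
definition GH_continuous_on :: "real \<Rightarrow> real \<Rightarrow> (real \<Rightarrow> 'a mspace_rep) \<Rightarrow> bool" where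
  "GH_continuous_on a b \<gamma> \<longleftrightarrow> (\<forall>t\<in>{a..b}. is_mspace (\<gamma> t)) \<and>
     (\<forall>t\<in>{a..b}. \<forall>e>0. \<exists>\<delta>>0. \<forall>s\<in>{a..b}. \<bar>s - t\<bar> < \<delta> \<longrightarrow> dGH (\<gamma> s) (\<gamma> t) < ereal e)"

definition GH_length :: "real \<Rightarrow> real \<Rightarrow> (real \<Rightarrow> 'a mspace_rep) \<Rightarrow> ereal" where
  "GH_length a b \<gamma> = Sup {(\<Sum>i<k. dGH (\<gamma> (t i)) (\<gamma> (t (Suc i)))) | k t.
      t 0 = a \<and> t k = b \<and> (\<forall>i<k. t i < t (Suc i))}"

definition eps_shortest_curve ::
  "real \<Rightarrow> real \<Rightarrow> real \<Rightarrow> (real \<Rightarrow> 'a mspace_rep) \<Rightarrow> 'b mspace_rep \<Rightarrow> 'c mspace_rep \<Rightarrow> bool" where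
  "eps_shortest_curve \<epsilon> a b \<gamma> A B \<longleftrightarrow> a \<le> b \<and> GH_continuous_on a b \<gamma> \<and>
     isometric (\<gamma> a) A \<and> isometric (\<gamma> b) B \<and> GH_length a b \<gamma> \<le> dGH A B + ereal \<epsilon>"

end

theory Submission
  imports Defs
begin

text \<open>A point is at Gromov--Hausdorff distance at least half the diameter from any space, so a
  curve from A through a point to B has length at least (diam A + diam B)/2. On the other hand,
  gluing A and B at mutual distance max(diam A, diam B)/2 shows that d_GH(A, B) is at most
  max(diam A, diam B)/2. Since 2 epsilon < min(diam A, diam B), the length exceeds
  d_GH(A, B) + epsilon.\<close>

lemma isometric_Delta1_imp_singleton:
  assumes "isometric X Delta1"
  obtains p where "fst X = {p}"
proof -
  obtain f where f: "bij_betw f (fst X) {()}"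
    using assms unfolding isometric_def Delta1_def by auto
  then obtain p where "p \<in> fst X" by (auto simp: bij_betw_def)
  moreover have "x = p" if "x \<in> fst X" for x
    using f that \<open>p \<in> fst X\<close> by (auto simp: bij_betw_def inj_on_def)
  ultimately show thesis using that by blast
qed

lemma mdiam_isometric:
  assumes "isometric X Y"
  shows "mdiam X = mdiam Y"
proof -
  obtain f where f: "bij_betw f (fst X) (fst Y)"
    and d: "\<forall>x\<in>fst X. \<forall>y\<in>fst X. snd Y (f x) (f y) = snd X x y"
    using assms unfolding isometric_def by auto
  have Y: "fst Y = f ` fst X" using f by (simp add: bij_betw_def)
  have "{ereal (snd Y x y) | x y. x \<in> fst Y \<and> y \<in> fst Y}
      = {ereal (snd X x y) | x y. x \<in> fst X \<and> y \<in> fst X}"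
    unfolding Y using d by force
  then show ?thesis unfolding mdiam_def by simp
qed

lemma mdiam_empty: "fst X = {} \<Longrightarrow> mdiam X = -\<infinity>"
  unfolding mdiam_def by (simp add: bot_ereal_def)

lemma mdiam_singleton:
  assumes "is_mspace X" and "fst X = {p}"
  shows "mdiam X = 0"
proof -
  have "snd X p p = 0"
    using assms Metric_space.zero[of "fst X" "snd X" p p] by (auto simp: is_mspace_def)
  then have "{ereal (snd X x y) | x y. x \<in> fst X \<and> y \<in> fst X} = {0}" using assms(2) by auto
  then show ?thesis unfolding mdiam_def by simp
qed

lemma dist_le_mdiam:
  assumes "x \<in> fst X" and "y \<in> fst X"
  shows "ereal (snd X x y) \<le> mdiam X"
  unfolding mdiam_def using assms by (intro Sup_upper) auto

lemma bounded_mspace_mdiam_real: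
  assumes "bounded_mspace X" and "fst X \<noteq> {}"
  obtains d where "mdiam X = ereal d"
proof -
  obtain C where C: "\<forall>x\<in>fst X. \<forall>y\<in>fst X. snd X x y \<le> C"
    and M: "Metric_space (fst X) (snd X)"
    using assms(1) unfolding bounded_mspace_def is_mspace_def by blast
  obtain p where p: "p \<in> fst X" using assms(2) by blast
  have "mdiam X \<le> ereal C" unfolding mdiam_def using C by (auto intro!: Sup_least)
  moreover have "0 \<le> mdiam X"
    using dist_le_mdiam[OF p p] Metric_space.zero[OF M p p] by (simp add: zero_ereal_def)
  ultimately show thesis using that by (cases "mdiam X") auto
qed

lemma hausdist_le_commute:
  assumes "Metric_space Z dZ"
  shows "hausdist_le dZ P Q r \<longleftrightarrow> hausdist_le dZ Q P r"
  unfolding hausdist_le_def by (auto simp: Metric_space.commute[OF assms])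

lemma hausdist_le_dist_le:
  assumes M: "Metric_space Z dZ" and "P \<subseteq> Z" and "Q \<subseteq> Z"
    and H: "hausdist_le dZ P Q r" and x: "x \<in> P" and y: "y \<in> P"
    and c: "\<forall>u\<in>Q. \<forall>v\<in>Q. dZ u v \<le> c"
  shows "dZ x y \<le> c + 2 * r"
proof (rule field_le_epsilon)
  fix e :: real assume "0 < e"
  then obtain u v where u: "u \<in> Q" "dZ x u < r + e/2" and v: "v \<in> Q" "dZ y v < r + e/2"
    using H x y unfolding hausdist_le_def by (meson less_add_same_cancel1 half_gt_zero)
  have "dZ x y \<le> dZ x u + dZ u v + dZ v y"
    using Metric_space.triangle[OF M] u v x y assms(2,3)
    by (smt (verit, best) subsetD)
  also have "\<dots> = dZ x u + dZ u v + dZ y v" using Metric_space.commute[OF M] by metis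
  also have "\<dots> \<le> c + 2 * r + e" using u v c by fastforce
  finally show "dZ x y \<le> c + 2 * r + e" .
qed

text \<open>The two orders of the arguments of dGH use different ambient types, which is why the
  lower bound is first proved for a fixed embedding.\<close>

lemma mdiam_le_hausdist_point:
  assumes M: "Metric_space Z dZ" and f: "isom_embed f X Z dZ" and g: "isom_embed g P Z dZ"
    and P: "fst P = {p}" and H: "hausdist_le dZ (f ` fst X) (g ` fst P) r"
  shows "mdiam X / 2 \<le> ereal r"
proof -
  have fX: "f ` fst X \<subseteq> Z" using f by (simp add: isom_embed_def)
  have gP: "g ` fst P = {g p}" "g p \<in> Z" using g P by (auto simp: isom_embed_def)
  have gPZ: "g ` fst P \<subseteq> Z" using gP by simp
  have "\<forall>u\<in>g ` fst P. \<forall>v\<in>g ` fst P. dZ u v \<le> 0"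
    using gP Metric_space.zero[OF M, of "g p" "g p"] by simp
  then have "dZ (f x) (f y) \<le> 0 + 2 * r" if "x \<in> fst X" "y \<in> fst X" for x y
    using hausdist_le_dist_le[OF M fX gPZ H imageI[OF that(1)] imageI[OF that(2)]] by blast
  then have "snd X x y \<le> 2 * r" if "x \<in> fst X" "y \<in> fst X" for x y
    using f that by (simp add: isom_embed_def)
  then have "mdiam X \<le> ereal (2 * r)" unfolding mdiam_def by (auto intro!: Sup_least)
  then show ?thesis by (cases "mdiam X") auto
qed

lemma mdiam_le_dGH_point:
  fixes X :: "'a mspace_rep" and P :: "'b mspace_rep"
  assumes "fst P = {p}"
  shows "mdiam X / 2 \<le> dGH X P"
  unfolding dGH_def
proof (rule Inf_greatest, clarify)
  fix r and Z :: "('a + 'b) set" and dZ f g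
  assume "Metric_space Z dZ" "isom_embed f X Z dZ" "isom_embed g P Z dZ"
    "hausdist_le dZ (f ` fst X) (g ` fst P) r"
  then show "mdiam X / 2 \<le> ereal r" by (rule mdiam_le_hausdist_point[OF _ _ _ assms])
qed

lemma mdiam_le_dGH_point':
  fixes X :: "'a mspace_rep" and P :: "'b mspace_rep"
  assumes "fst P = {p}"
  shows "mdiam X / 2 \<le> dGH P X"
  unfolding dGH_def
proof (rule Inf_greatest, clarify)
  fix r and Z :: "('b + 'a) set" and dZ f g
  assume M: "Metric_space Z dZ" and f: "isom_embed f P Z dZ" and g: "isom_embed g X Z dZ"
    and H: "hausdist_le dZ (f ` fst P) (g ` fst X) r"
  from H have "hausdist_le dZ (g ` fst X) (f ` fst P) r" by (simp add: hausdist_le_commute[OF M])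
  then show "mdiam X / 2 \<le> ereal r" by (rule mdiam_le_hausdist_point[OF M g f assms])
qed

definition glue_dist :: "'a mspace_rep \<Rightarrow> 'b mspace_rep \<Rightarrow> real \<Rightarrow> ('a + 'b) \<Rightarrow> ('a + 'b) \<Rightarrow> real"
  where "glue_dist X Y m u v = (case (u, v) of
      (Inl x, Inl y) \<Rightarrow> snd X x y | (Inr x, Inr y) \<Rightarrow> snd Y x y | _ \<Rightarrow> m)"

lemma glue_dist_metric:
  assumes MX: "Metric_space (fst X) (snd X)" and MY: "Metric_space (fst Y) (snd Y)"
    and dX: "\<forall>x\<in>fst X. \<forall>y\<in>fst X. snd X x y \<le> 2 * m"
    and dY: "\<forall>x\<in>fst Y. \<forall>y\<in>fst Y. snd Y x y \<le> 2 * m"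
    and "0 < m"
  shows "Metric_space (Inl ` fst X \<union> Inr ` fst Y) (glue_dist X Y m)"
proof
  fix u v
  show "0 \<le> glue_dist X Y m u v" using \<open>0 < m\<close> Metric_space.nonneg[OF MX] Metric_space.nonneg[OF MY]
    by (auto simp: glue_dist_def split: sum.split)
  show "glue_dist X Y m u v = glue_dist X Y m v u"
    using Metric_space.commute[OF MX] Metric_space.commute[OF MY]
    by (auto simp: glue_dist_def split: sum.split)
next
  fix u v assume "u \<in> Inl ` fst X \<union> Inr ` fst Y" "v \<in> Inl ` fst X \<union> Inr ` fst Y"
  then show "glue_dist X Y m u v = 0 \<longleftrightarrow> u = v"
    using \<open>0 < m\<close> Metric_space.zero[OF MX] Metric_space.zero[OF MY] by (auto simp: glue_dist_def)
next
  fix u v w assume "u \<in> Inl ` fst X \<union> Inr ` fst Y" "v \<in> Inl ` fst X \<union> Inr ` fst Y"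
    "w \<in> Inl ` fst X \<union> Inr ` fst Y"
  then show "glue_dist X Y m u w \<le> glue_dist X Y m u v + glue_dist X Y m v w"
    using \<open>0 < m\<close> Metric_space.triangle[OF MX] Metric_space.triangle[OF MY]
      Metric_space.nonneg[OF MX] Metric_space.nonneg[OF MY] dX dY
    by (auto simp: glue_dist_def)
qed

lemma dGH_le_half_diam_bound:
  fixes X :: "'a mspace_rep" and Y :: "'b mspace_rep"
  assumes "Metric_space (fst X) (snd X)" and "Metric_space (fst Y) (snd Y)"
    and "\<forall>x\<in>fst X. \<forall>y\<in>fst X. snd X x y \<le> 2 * m"
    and "\<forall>x\<in>fst Y. \<forall>y\<in>fst Y. snd Y x y \<le> 2 * m"
    and "0 < m" and "fst X \<noteq> {}" and "fst Y \<noteq> {}"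
  shows "dGH X Y \<le> ereal m"
  unfolding dGH_def
proof (rule Inf_lower, intro CollectI exI conjI)
  show "Metric_space (Inl ` fst X \<union> Inr ` fst Y) (glue_dist X Y m)"
    using assms(1-5) by (rule glue_dist_metric)
  show "isom_embed Inl X (Inl ` fst X \<union> Inr ` fst Y) (glue_dist X Y m)"
    "isom_embed Inr Y (Inl ` fst X \<union> Inr ` fst Y) (glue_dist X Y m)"
    by (auto simp: isom_embed_def glue_dist_def)
  show "hausdist_le (glue_dist X Y m) (Inl ` fst X) (Inr ` fst Y) m"
    using assms(6,7) by (auto simp: hausdist_le_def glue_dist_def)
qed (use \<open>0 < m\<close> in auto)

lemma GH_length_ge_two_steps:
  assumes "a < t" and "t < b"
  shows "dGH (\<gamma> a) (\<gamma> t) + dGH (\<gamma> t) (\<gamma> b) \<le> GH_length a b \<gamma>"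
  unfolding GH_length_def
proof (rule Sup_upper, intro CollectI exI conjI)
  let ?t = "\<lambda>i::nat. if i = 0 then a else if i = 1 then t else b"
  show "dGH (\<gamma> a) (\<gamma> t) + dGH (\<gamma> t) (\<gamma> b) = (\<Sum>i<2. dGH (\<gamma> (?t i)) (\<gamma> (?t (Suc i))))"
    by (simp add: numeral_2_eq_2)
  show "?t 0 = a" "?t 2 = b" by auto
  show "\<forall>i<2. ?t i < ?t (Suc i)" using assms by (auto simp: numeral_2_eq_2 less_Suc_eq)
qed

lemma dGH_le_half_max_mdiam:
  assumes "is_mspace X" and "is_mspace Y"
    and "mdiam X = ereal dX" and "mdiam Y = ereal dY" and "0 < max dX dY"
  shows "dGH X Y \<le> ereal (max dX dY / 2)"
proof (rule dGH_le_half_diam_bound)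
  show "Metric_space (fst X) (snd X)" "Metric_space (fst Y) (snd Y)"
    using assms(1,2) by (simp_all add: is_mspace_def)
  show "\<forall>x\<in>fst X. \<forall>y\<in>fst X. snd X x y \<le> 2 * (max dX dY / 2)"
    "\<forall>x\<in>fst Y. \<forall>y\<in>fst Y. snd Y x y \<le> 2 * (max dX dY / 2)"
    using dist_le_mdiam[of _ X] dist_le_mdiam[of _ Y] assms(3,4) by (force simp: le_max_iff_disj)+
  show "fst X \<noteq> {}" "fst Y \<noteq> {}" using assms(3,4) mdiam_empty[of X] mdiam_empty[of Y] by auto
qed (use assms(5) in simp)

lemma GH_length_through_point:
  assumes "a < t" and "t < b" and "fst (\<gamma> t) = {p}"
  shows "mdiam (\<gamma> a) / 2 + mdiam (\<gamma> b) / 2 \<le> GH_length a b \<gamma>"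
proof -
  have "mdiam (\<gamma> a) / 2 + mdiam (\<gamma> b) / 2 \<le> dGH (\<gamma> a) (\<gamma> t) + dGH (\<gamma> t) (\<gamma> b)"
    using mdiam_le_dGH_point[OF assms(3)] mdiam_le_dGH_point'[OF assms(3)] by (rule add_mono)
  also have "\<dots> \<le> GH_length a b \<gamma>" using assms(1,2) by (rule GH_length_ge_two_steps)
  finally show ?thesis .
qed

theorem lemma5:
  fixes A :: "'b mspace_rep" and B :: "'c mspace_rep" and \<epsilon> :: real
    and \<gamma> :: "real \<Rightarrow> 'a mspace_rep" and a b :: real
  assumes "bounded_mspace A" and "bounded_mspace B"
    and "mdiam A \<noteq> 0" and "mdiam B \<noteq> 0"
    and "\<epsilon> > 0" and "ereal (2 * \<epsilon>) < min (mdiam A) (mdiam B)"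
    and "eps_shortest_curve \<epsilon> a b \<gamma> A B"
  shows "\<not> (\<exists>t\<in>{a..b}. isometric (\<gamma> t) Delta1)"
proof
  assume "\<exists>t\<in>{a..b}. isometric (\<gamma> t) Delta1"
  then obtain t p where t: "t \<in> {a..b}" and p: "fst (\<gamma> t) = {p}"
    using isometric_Delta1_imp_singleton by blast
  have curve: "GH_continuous_on a b \<gamma>" "isometric (\<gamma> a) A" "isometric (\<gamma> b) B"
    "GH_length a b \<gamma> \<le> dGH A B + ereal \<epsilon>"
    using assms(7) unfolding eps_shortest_curve_def by auto
  have "is_mspace (\<gamma> t)" using curve(1) t unfolding GH_continuous_on_def by blast
  then have "mdiam (\<gamma> t) = 0" using p by (rule mdiam_singleton)
  then have "t \<noteq> a" "t \<noteq> b"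
    using assms(3,4) mdiam_isometric[OF curve(2)] mdiam_isometric[OF curve(3)] by auto
  with t have "a < t" "t < b" by auto
  have "fst A \<noteq> {}" "fst B \<noteq> {}" using assms(6) mdiam_empty[of A] mdiam_empty[of B] by auto
  then obtain dA dB where dA: "mdiam A = ereal dA" and dB: "mdiam B = ereal dB"
    using bounded_mspace_mdiam_real assms(1,2) by metis
  have eps: "2 * \<epsilon> < dA" "2 * \<epsilon> < dB" using assms(6) dA dB by auto
  have "ereal (dA / 2) + ereal (dB / 2) \<le> GH_length a b \<gamma>"
    using GH_length_through_point[of a t b \<gamma> p] \<open>a < t\<close> \<open>t < b\<close> p
    by (simp add: mdiam_isometric[OF curve(2)] mdiam_isometric[OF curve(3)] dA dB)
  also have "\<dots> \<le> dGH A B + ereal \<epsilon>" by (rule curve(4))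
  also have "\<dots> \<le> ereal (max dA dB / 2) + ereal \<epsilon>"
    using assms(1,2,5) dA dB eps
    by (intro add_right_mono dGH_le_half_max_mdiam) (auto simp: bounded_mspace_def)
  finally show False using eps by (simp add: max_def split: if_splits)
qed

end
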